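(* Let $\mathcal{H}$ be a complex linear space with a non-degenerate indefinite inner product $[\cdot,\cdot]$, and let $\mathcal{F}_{++}=\{f\in\mathcal{H}:[f,f]>0\}$. Let $W$ be a linear operator defined on $\mathcal{F}_{++}$ which maps $\mathcal{F}_{++}$ onto $\mathcal{F}_{++}$ in a one-to-one manner. Then the (unique) linear extension of $W$ to $\mathcal{H}$ is a bijection of $\mathcal{H}$ onto itself, and $$[Wf,Wg]=\theta[f,g]\quad\text{for all } f,g\in\mathcal{H},\qquad\text{where}\quad \theta=\inf_{f\in\mathcal{F}_{++}}\frac{[Wf,Wf]}{[f,f]}>0.$$
   Context: An indefinite inner product on a complex linear space $\mathcal{H}$ is a Hermitian sesquilinear form $[\cdot,\cdot]$ (linear in the second argument) for which there exist vectors $f,g$ with $[f,f]>0$ and $[g,g]<0$; it is non-degenerate if $[f,g]=0$ for all $g$ implies $f=0$. An operator $W:\mathcal{F}_{++}\to\mathcal{H}$ is linear (on $\mathcal{F}_{++}$) if $W(cf)=cWf$ for $f\in\mathcal{F}_{++}$, nonzero $c\in\mathbb{C}$, and $W(f+g)=Wf+Wg$ whenever $f,g,f+g\in\mathcal{F}_{++}$. Such a $W$ extends uniquely to a linear operator on all of $\mathcal{H}$ (every vector is a sum of two positive vectors). *)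

theory Defs
  imports Complex_Main
begin

text \<open>The complex linear space H is modelled by a type 'a with an abstract complex
scalar multiplication sc satisfying the vector space axioms (locale vector_space).
B f g is the inner product [f,g], linear in the second argument.\<close>

definition hermitian_sesq ::
  "(complex \<Rightarrow> 'a::ab_group_add \<Rightarrow> 'a) \<Rightarrow> ('a \<Rightarrow> 'a \<Rightarrow> complex) \<Rightarrow> bool" where
  "hermitian_sesq sc B \<longleftrightarrow>
     (\<forall>f g h. B f (g + h) = B f g + B f h) \<and>
     (\<forall>f g c. B f (sc c g) = c * B f g) \<and>
     (\<forall>f g. B g f = cnj (B f g))"

definition indefinite :: "('a \<Rightarrow> 'a \<Rightarrow> complex) \<Rightarrow> bool" where
  "indefinite B \<longleftrightarrow> (\<exists>f g. Re (B f f) > 0 \<and> Re (B g g) < 0)"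

definition nondegenerate :: "('a::zero \<Rightarrow> 'a \<Rightarrow> complex) \<Rightarrow> bool" where
  "nondegenerate B \<longleftrightarrow> (\<forall>f. (\<forall>g. B f g = 0) \<longrightarrow> f = 0)"

text \<open>The positive cone F++ = {f. [f,f] > 0} (B f f is real for Hermitian B).\<close>
definition Fpp :: "('a \<Rightarrow> 'a \<Rightarrow> complex) \<Rightarrow> 'a set" where
  "Fpp B = {f. Re (B f f) > 0}"

definition linear_on ::
  "(complex \<Rightarrow> 'a::ab_group_add \<Rightarrow> 'a) \<Rightarrow> 'a set \<Rightarrow> ('a \<Rightarrow> 'a) \<Rightarrow> bool" where
  "linear_on sc S W \<longleftrightarrow>
     (\<forall>f\<in>S. \<forall>c. c \<noteq> 0 \<longrightarrow> W (sc c f) = sc c (W f)) \<and>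
     (\<forall>f g. f \<in> S \<and> g \<in> S \<and> f + g \<in> S \<longrightarrow> W (f + g) = W f + W g)"

end

theory Submission
  imports Defs "HOL-Real_Asymp.Real_Asymp"
begin

text \<open>Every x is a difference (x + f) - f of vectors of F++, so a linear extension V must be
  V x = W (x + f) - W f; this does not depend on f, because W is additive on F++ and any two
  admissible base points can be moved to a common one by adding a large multiple of a positive
  vector. V is bijective and maps F++ exactly onto F++. For [f,f] > 0 > [g,g] the line
  t \<mapsto> f + t g meets F++ in the open interval between the two roots of the concave quadratic
  [f + t g, f + t g], and V maps it onto the line through V f and V g; so the two quadratics
  have the same positivity set and are therefore proportional. Comparing coefficients,
  [V f, V f] / [f, f] is a constant \<theta> and Re [V f, V g] = \<theta> Re [f, g]. Translating by
  positive and negative vectors extends this identity to all f and g, and replacing g by -i g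
  gives the imaginary parts. The infimum in the statement is the infimum of a constant.\<close>

lemma nonneg_at_ends_if_pos_between:
  fixes f :: "real \<Rightarrow> real"
  assumes cont: "\<And>t. isCont f t" and "l < u" and pos: "\<And>t. l < t \<Longrightarrow> t < u \<Longrightarrow> f t > 0"
  shows "f l \<ge> 0" "f u \<ge> 0"
proof -
  have "eventually (\<lambda>t. 0 \<le> f t) (at_right l)" "eventually (\<lambda>t. 0 \<le> f t) (at_left u)"
    using \<open>l < u\<close> by (auto intro!: eventually_at_rightI eventually_at_leftI less_imp_le pos)
  then show "f l \<ge> 0" "f u \<ge> 0"
    using cont[of l] cont[of u] by (auto intro: tendsto_lowerbound simp: isCont_def filterlim_at_split)
qed

lemma concave_quadratic_roots:
  fixes a b c :: real
  assumes "a > 0" "c < 0"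
  obtains t1 t2 where "t1 < 0" "0 < t2" "\<And>t. a + 2*b*t + c*t^2 = c * (t - t1) * (t - t2)"
proof -
  define s where "s = sqrt (b^2 - a*c)"
  have "a * c < 0" using assms by (simp add: mult_pos_neg)
  then have disc: "b^2 < b^2 - a*c" by simp
  then have "0 \<le> b^2 - a*c" using zero_le_power2[of b] by linarith
  then have s2: "s^2 = b^2 - a*c" unfolding s_def by simp
  have "\<bar>b\<bar> < s"
    unfolding s_def using disc by (intro real_less_rsqrt) simp
  show ?thesis
  proof
    show "(s - b) / c < 0" "0 < (- b - s) / c"
      using \<open>\<bar>b\<bar> < s\<close> assms by (auto simp: divide_pos_neg divide_neg_neg)
    have "c * (t - (s - b) / c) * (t - (- b - s) / c) = (b^2 - s^2) / c + 2*b*t + c*t^2" for t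
      using assms by (simp add: field_simps power2_eq_square)
    then show "a + 2*b*t + c*t^2 = c * (t - (s - b) / c) * (t - (- b - s) / c)" for t
      using assms s2 by simp
  qed
qed

text \<open>The positivity set of a concave quadratic with positive constant term is the open
  interval between its two roots, and the second quadratic must vanish at both of them.\<close>
lemma quadratics_same_positivity_proportional:
  fixes a b c a' b' c' :: real
  assumes "a > 0" "c < 0" "a' > 0"
    and same_pos: "\<And>t. a + 2*b*t + c*t^2 > 0 \<longleftrightarrow> a' + 2*b'*t + c'*t^2 > 0"
  shows "a * b' = a' * b" "a * c' = a' * c"
proof -
  obtain t1 t2 where "t1 < 0" "0 < t2"
    and factor: "\<And>t. a + 2*b*t + c*t^2 = c * (t - t1) * (t - t2)"
    using concave_quadratic_roots \<open>a > 0\<close> \<open>c < 0\<close> by blast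
  define p' where "p' t = a' + 2*b'*t + c'*t^2" for t
  have "p' t > 0" if "t1 < t" "t < t2" for t
  proof -
    have "c * (t - t1) * (t - t2) > 0"
      using that \<open>c < 0\<close> by (intro mult_neg_neg mult_neg_pos) auto
    then show ?thesis using same_pos[of t] factor[of t] by (simp add: p'_def)
  qed
  moreover have "isCont p' t" for t
    unfolding p'_def by (intro continuous_intros)
  ultimately have "p' t1 \<ge> 0" "p' t2 \<ge> 0"
    using nonneg_at_ends_if_pos_between[of p' t1 t2] \<open>t1 < 0\<close> \<open>0 < t2\<close> by auto
  moreover have "\<not> p' t1 > 0" "\<not> p' t2 > 0"
    using same_pos[of t1] same_pos[of t2] factor[of t1] factor[of t2] by (simp_all add: p'_def)
  ultimately have "p' t1 = 0" "p' t2 = 0" by linarith+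
  moreover have "t * (2 * (a*b' - a'*b) + (a*c' - a'*c) * t) = a * p' t - a' * (a + 2*b*t + c*t^2)"
    for t by (simp add: p'_def algebra_simps power2_eq_square)
  ultimately have "t * (2 * (a*b' - a'*b) + (a*c' - a'*c) * t) = 0" if "t = t1 \<or> t = t2" for t
    using that factor[of t] by auto
  then have "2 * (a*b' - a'*b) + (a*c' - a'*c) * t1 = 0" "2 * (a*b' - a'*b) + (a*c' - a'*c) * t2 = 0"
    using \<open>t1 < 0\<close> \<open>0 < t2\<close> by auto
  then have "(a*c' - a'*c) * (t1 - t2) = 0" by (simp add: algebra_simps)
  then have "a*c' - a'*c = 0" using \<open>t1 < 0\<close> \<open>0 < t2\<close> by simp
  with \<open>2 * (a*b' - a'*b) + (a*c' - a'*c) * t1 = 0\<close> show "a * b' = a' * b" "a * c' = a' * c"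
    by simp_all
qed

locale hermitian_form = vector_space sc for sc :: "complex \<Rightarrow> 'a::ab_group_add \<Rightarrow> 'a" +
  fixes B :: "'a \<Rightarrow> 'a \<Rightarrow> complex"
  assumes hermitian: "hermitian_sesq sc B"
begin

abbreviation Q :: "'a \<Rightarrow> real" where "Q x \<equiv> Re (B x x)"

lemma mem_Fpp_iff: "x \<in> Fpp B \<longleftrightarrow> Q x > 0"
  by (simp add: Fpp_def)

lemma B_add_right: "B f (g + h) = B f g + B f h"
  and B_scale_right: "B f (sc c g) = c * B f g"
  and B_commute_cnj: "B g f = cnj (B f g)"
  using hermitian unfolding hermitian_sesq_def by blast+

lemma B_add_left: "B (f + g) h = B f h + B g h"
  by (metis B_add_right B_commute_cnj complex_cnj_add)

lemma B_scale_left: "B (sc c f) g = cnj c * B f g"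
  by (metis B_scale_right B_commute_cnj complex_cnj_mult)

lemma Re_B_commute: "Re (B g f) = Re (B f g)"
  by (subst B_commute_cnj) simp

lemma Q_scale: "Q (sc c x) = (cmod c)^2 * Q x"
proof -
  have "B (sc c x) (sc c x) = of_real ((cmod c)^2) * B x x"
    by (simp add: B_scale_left B_scale_right complex_norm_square[of c] mult.commute del: of_real_power)
  then show ?thesis by simp
qed

lemma Q_add_scale: "Q (x + sc (of_real t) y) = Q x + 2 * Re (B x y) * t + Q y * t^2"
  using Re_B_commute[of x y]
  by (simp add: B_add_left B_add_right B_scale_left B_scale_right algebra_simps power2_eq_square)

lemma eventually_Q_add_scale_pos:
  assumes "Q y > 0" shows "eventually (\<lambda>t. Q (x + sc (of_real t) y) > 0) at_top"
  unfolding Q_add_scale using assms by real_asymp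

lemma eventually_Q_add_scale_neg:
  assumes "Q y < 0" shows "eventually (\<lambda>t. Q (x + sc (of_real t) y) < 0) at_top"
  unfolding Q_add_scale using assms by real_asymp

end

locale indefinite_form = hermitian_form +
  assumes indefinite: "indefinite B"
begin

lemma ex_Q_pos: obtains f where "Q f > 0"
  using indefinite by (auto simp: indefinite_def)

lemma ex_Q_neg: obtains g where "Q g < 0"
  using indefinite by (auto simp: indefinite_def)

lemma ex_pos_translate: obtains f where "Q f > 0" "Q (x + f) > 0"
proof -
  obtain p where "Q p > 0" by (rule ex_Q_pos)
  then have "eventually (\<lambda>t. t > 0 \<and> Q (x + sc (of_real t) p) > 0) at_top"
    by (intro eventually_conj eventually_gt_at_top eventually_Q_add_scale_pos)
  then obtain t where "t > 0" "Q (x + sc (of_real t) p) > 0"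
    using eventually_happens'[OF trivial_limit_at_top_linorder] by blast
  moreover have "Q (sc (of_real t) p) > 0"
    using \<open>t > 0\<close> \<open>Q p > 0\<close> by (simp add: Q_scale)
  ultimately show ?thesis using that by blast
qed

end

locale cone_bijection = indefinite_form +
  fixes W :: "'a \<Rightarrow> 'a"
  assumes linear_on_W: "linear_on sc (Fpp B) W"
    and bij_W: "bij_betw W (Fpp B) (Fpp B)"
begin

lemma W_scale: "Q f > 0 \<Longrightarrow> c \<noteq> 0 \<Longrightarrow> W (sc c f) = sc c (W f)"
  using linear_on_W by (simp add: linear_on_def mem_Fpp_iff)

lemma W_add: "Q f > 0 \<Longrightarrow> Q g > 0 \<Longrightarrow> Q (f + g) > 0 \<Longrightarrow> W (f + g) = W f + W g"
  using linear_on_W by (simp add: linear_on_def mem_Fpp_iff)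

lemma Q_W_pos: "Q f > 0 \<Longrightarrow> Q (W f) > 0"
  using bij_W by (auto simp: bij_betw_def mem_Fpp_iff)

lemma W_inj: "Q f > 0 \<Longrightarrow> Q g > 0 \<Longrightarrow> W f = W g \<Longrightarrow> f = g"
  using bij_W by (auto simp: bij_betw_def inj_on_def mem_Fpp_iff)

lemma W_surj:
  assumes "Q h > 0" obtains f where "Q f > 0" "W f = h"
proof -
  have "h \<in> W ` Fpp B" using bij_W assms by (simp add: bij_betw_def mem_Fpp_iff)
  then show ?thesis using that by (auto simp: mem_Fpp_iff)
qed

lemma W_diff_shift:
  assumes "Q f > 0" "Q p > 0" "Q (f + p) > 0" "Q (x + f) > 0" "Q (x + f + p) > 0"
  shows "W (x + f + p) - W (f + p) = W (x + f) - W f"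
  using W_add[of f p] W_add[of "x + f" p] assms by simp

text \<open>Both base points can be shifted to the common base point f + t f', with t large.\<close>
lemma W_diff_base_independent:
  assumes "Q f > 0" "Q (x + f) > 0" "Q f' > 0" "Q (x + f') > 0"
  shows "W (x + f) - W f = W (x + f') - W f'"
proof -
  have "eventually (\<lambda>t. t > 0 \<and> Q (f + sc (of_real t) f') > 0 \<and> Q ((x + f) + sc (of_real t) f') > 0
      \<and> Q ((f - f') + sc (of_real t) f') > 0) at_top"
    using \<open>Q f' > 0\<close> by (intro eventually_conj eventually_gt_at_top eventually_Q_add_scale_pos)
  then obtain t where "t > 0" and pos: "Q (f + sc (of_real t) f') > 0"
    "Q ((x + f) + sc (of_real t) f') > 0" "Q ((f - f') + sc (of_real t) f') > 0"
    using eventually_happens'[OF trivial_limit_at_top_linorder] by blast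
  define p where "p = sc (of_real t) f'"
  define p' where "p' = (f - f') + sc (of_real t) f'"
  have "Q p > 0" using \<open>t > 0\<close> \<open>Q f' > 0\<close> by (simp add: p_def Q_scale)
  have "Q p' > 0" using pos(3) by (simp add: p'_def)
  have same_base: "f' + p' = f + p" "x + f' + p' = x + f + p"
    by (simp_all add: p_def p'_def algebra_simps)
  have "W (x + f) - W f = W (x + f + p) - W (f + p)"
    using W_diff_shift[of f p x] \<open>Q p > 0\<close> pos(1,2) assms(1,2) by (simp add: p_def)
  also have "\<dots> = W (x + f' + p') - W (f' + p')"
    by (simp only: same_base)
  also have "\<dots> = W (x + f') - W f'"
    using W_diff_shift[of f' p' x] \<open>Q p' > 0\<close> pos(1,2) assms(3,4) by (simp add: p_def same_base)
  finally show ?thesis .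
qed

definition Wext :: "'a \<Rightarrow> 'a" where
  "Wext x = (let f = SOME f. Q f > 0 \<and> Q (x + f) > 0 in W (x + f) - W f)"

lemma Wext_eq: "Q f > 0 \<Longrightarrow> Q (x + f) > 0 \<Longrightarrow> Wext x = W (x + f) - W f"
proof -
  assume "Q f > 0" "Q (x + f) > 0"
  define g where "g = (SOME g. Q g > 0 \<and> Q (x + g) > 0)"
  have "\<exists>g. Q g > 0 \<and> Q (x + g) > 0" using ex_pos_translate by blast
  then have "Q g > 0 \<and> Q (x + g) > 0" unfolding g_def by (rule someI_ex)
  then have "W (x + g) - W g = W (x + f) - W f"
    using W_diff_base_independent \<open>Q f > 0\<close> \<open>Q (x + f) > 0\<close> by blast
  then show ?thesis unfolding Wext_def g_def Let_def by simp
qed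

lemma Wext_eq_W: "Q x > 0 \<Longrightarrow> Wext x = W x"
proof -
  assume "Q x > 0"
  have double: "x + x = sc 2 x" using scale_left_distrib[of 1 1 x] by simp
  have "Q (x + x) > 0" using \<open>Q x > 0\<close> by (simp add: double Q_scale)
  then show ?thesis using Wext_eq[of x x] W_add[of x x] \<open>Q x > 0\<close> by simp
qed

lemma Wext_add: "Wext (x + y) = Wext x + Wext y"
proof -
  obtain f where f: "Q f > 0" "Q (x + f) > 0" by (rule ex_pos_translate)
  have "eventually (\<lambda>t. t > 0 \<and> Q (y + sc (of_real t) f) > 0 \<and> Q (f + sc (of_real t) f) > 0
      \<and> Q ((x + f + y) + sc (of_real t) f) > 0) at_top"
    using f by (intro eventually_conj eventually_gt_at_top eventually_Q_add_scale_pos)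
  then obtain t where "t > 0" and pos: "Q (y + sc (of_real t) f) > 0" "Q (f + sc (of_real t) f) > 0"
    "Q ((x + f + y) + sc (of_real t) f) > 0"
    using eventually_happens'[OF trivial_limit_at_top_linorder] by blast
  define g where "g = sc (of_real t) f"
  have regroup: "(x + y) + (f + g) = (x + f) + (y + g)" "(x + f) + (y + g) = (x + f + y) + g"
    by (simp_all add: algebra_simps)
  have g: "Q g > 0" "Q (y + g) > 0" "Q (f + g) > 0" "Q ((x + f) + (y + g)) > 0"
    using \<open>t > 0\<close> f pos unfolding regroup(2) by (simp_all add: g_def Q_scale)
  have "Wext (x + y) = W ((x + f) + (y + g)) - W (f + g)"
    using Wext_eq[of "f + g" "x + y"] g by (simp add: regroup(1))
  also have "\<dots> = (W (x + f) - W f) + (W (y + g) - W g)"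
    using W_add[of "x + f" "y + g"] W_add[of f g] f g by simp
  also have "\<dots> = Wext x + Wext y"
    using Wext_eq f g by simp
  finally show ?thesis .
qed

lemma Wext_scale: "Wext (sc c x) = sc c (Wext x)"
proof (cases "c = 0")
  case True
  obtain f where "Q f > 0" by (rule ex_Q_pos)
  then show ?thesis using Wext_eq[of f 0] True by simp
next
  case False
  obtain f where f: "Q f > 0" "Q (x + f) > 0" by (rule ex_pos_translate)
  then have "Q (sc c f) > 0" "Q (sc c x + sc c f) > 0"
    using False by (simp_all add: Q_scale scale_right_distrib[symmetric])
  then have "Wext (sc c x) = W (sc c x + sc c f) - W (sc c f)" by (rule Wext_eq)
  also have "\<dots> = W (sc c (x + f)) - W (sc c f)" by (simp add: scale_right_distrib)
  also have "\<dots> = sc c (Wext x)"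
    using W_scale f False Wext_eq[OF f] by (simp add: scale_right_diff_distrib)
  finally show ?thesis .
qed

lemma linear_Wext: "Vector_Spaces.linear sc sc Wext"
  unfolding Vector_Spaces.linear_iff using Wext_add Wext_scale vector_space_axioms by blast

sublocale Wext: Vector_Spaces.linear sc sc Wext
  by (rule linear_Wext)

lemma linear_extension_unique:
  assumes "Vector_Spaces.linear sc sc V" "\<forall>f\<in>Fpp B. V f = W f"
  shows "V = Wext"
proof
  fix x
  interpret V: Vector_Spaces.linear sc sc V by fact
  obtain f where f: "Q f > 0" "Q (x + f) > 0" by (rule ex_pos_translate)
  have "V x = V (x + f) - V f" by (simp add: V.add)
  also have "\<dots> = Wext (x + f) - Wext f" using assms(2) f by (simp add: mem_Fpp_iff Wext_eq_W)
  also have "\<dots> = Wext x" by (simp add: Wext.add)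
  finally show "V x = Wext x" .
qed

lemma Wext_eq_0_iff: "Wext x = 0 \<longleftrightarrow> x = 0"
proof
  assume "Wext x = 0"
  obtain f where f: "Q f > 0" "Q (x + f) > 0" by (rule ex_pos_translate)
  then have "W (x + f) = W f" using Wext_eq \<open>Wext x = 0\<close> by simp
  then have "x + f = f" using W_inj f by blast
  then show "x = 0" by simp
qed simp

lemma inj_Wext: "inj Wext"
  by (rule injI) (metis Wext.diff Wext_eq_0_iff right_minus_eq)

lemma surj_Wext: "surj Wext"
proof -
  have "y \<in> range Wext" for y
  proof -
    obtain f where f: "Q f > 0" "Q (y + f) > 0" by (rule ex_pos_translate)
    obtain u where u: "Q u > 0" "W u = y + f" using W_surj f(2) by blast
    obtain v where v: "Q v > 0" "W v = f" using W_surj f(1) by blast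
    have "Wext (u - v) = y" using u v by (simp add: Wext.diff Wext_eq_W)
    then show ?thesis by (metis rangeI)
  qed
  then show ?thesis by blast
qed

lemma bij_Wext: "bij Wext"
  using inj_Wext surj_Wext by (rule bijI)

lemma Q_Wext_pos_iff: "Q (Wext x) > 0 \<longleftrightarrow> Q x > 0"
proof
  assume "Q (Wext x) > 0"
  then obtain h where "Q h > 0" "W h = Wext x" by (rule W_surj)
  then have "Wext h = Wext x" by (simp add: Wext_eq_W)
  then show "Q x > 0" using inj_Wext \<open>Q h > 0\<close> by (metis injD)
qed (simp add: Wext_eq_W Q_W_pos)

text \<open>Along the line through f in direction g, Wext preserves the positivity set of the
  quadratic t \<mapsto> Q (f + t g).\<close>
lemma Wext_quadratic_identities:
  assumes "Q f > 0" "Q g < 0"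
  shows "Q f * Re (B (Wext f) (Wext g)) = Q (Wext f) * Re (B f g)"
    and "Q f * Q (Wext g) = Q (Wext f) * Q g"
proof -
  have same_pos: "Q f + 2 * Re (B f g) * t + Q g * t^2 > 0
    \<longleftrightarrow> Q (Wext f) + 2 * Re (B (Wext f) (Wext g)) * t + Q (Wext g) * t^2 > 0" for t
    using Q_Wext_pos_iff[of "f + sc (of_real t) g"] by (simp add: Wext.add Wext.scale Q_add_scale)
  have "Q (Wext f) > 0" using assms(1) by (simp add: Q_Wext_pos_iff)
  from quadratics_same_positivity_proportional[OF assms this same_pos]
  show "Q f * Re (B (Wext f) (Wext g)) = Q (Wext f) * Re (B f g)"
    and "Q f * Q (Wext g) = Q (Wext f) * Q g" .
qed

definition theta :: real where
  "theta = Inf ((\<lambda>f. Q (W f) / Q f) ` Fpp B)"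

lemma Q_W_eq_theta: "Q f > 0 \<Longrightarrow> Q (W f) = theta * Q f"
proof -
  obtain g where "Q g < 0" by (rule ex_Q_neg)
  define r where "r = Q (Wext g) / Q g"
  have ratio: "Q (W f) / Q f = r" if "Q f > 0" for f
    using Wext_quadratic_identities(2)[OF that \<open>Q g < 0\<close>] that \<open>Q g < 0\<close>
    by (simp add: r_def Wext_eq_W field_simps)
  obtain f0 where "Q f0 > 0" by (rule ex_Q_pos)
  then have "(\<lambda>f. Q (W f) / Q f) ` Fpp B = {r}"
    using ratio by (auto simp: mem_Fpp_iff image_iff)
  then have "theta = r" by (simp add: theta_def)
  then show "Q f > 0 \<Longrightarrow> Q (W f) = theta * Q f" using ratio by (simp add: field_simps)
qed

lemma theta_pos: "theta > 0"
proof -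
  obtain f where "Q f > 0" by (rule ex_Q_pos)
  then show ?thesis using Q_W_eq_theta[of f] Q_W_pos[of f] by (simp add: zero_less_mult_iff)
qed

lemma Re_B_Wext_pos_neg:
  assumes "Q f > 0" "Q g < 0"
  shows "Re (B (Wext f) (Wext g)) = theta * Re (B f g)"
  using Wext_quadratic_identities(1)[OF assms] Q_W_eq_theta[OF \<open>Q f > 0\<close>] \<open>Q f > 0\<close>
  by (simp add: Wext_eq_W)

lemma Re_B_Wext_pos:
  assumes "Q f > 0"
  shows "Re (B (Wext f) (Wext y)) = theta * Re (B f y)"
proof -
  obtain g where "Q g < 0" by (rule ex_Q_neg)
  then have "eventually (\<lambda>t. t > 0 \<and> Q (y + sc (of_real t) g) < 0) at_top"
    by (intro eventually_conj eventually_gt_at_top eventually_Q_add_scale_neg)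
  then obtain t where "t > 0" "Q (y + sc (of_real t) g) < 0"
    using eventually_happens'[OF trivial_limit_at_top_linorder] by blast
  moreover have "Q (sc (of_real t) g) < 0"
    using \<open>t > 0\<close> \<open>Q g < 0\<close> by (simp add: Q_scale mult_pos_neg)
  ultimately show ?thesis
    using Re_B_Wext_pos_neg[OF assms, of "y + sc (of_real t) g"] Re_B_Wext_pos_neg[OF assms, of "sc (of_real t) g"]
    by (simp add: Wext.add Wext.scale B_add_right algebra_simps)
qed

lemma Re_B_Wext: "Re (B (Wext x) (Wext y)) = theta * Re (B x y)"
proof -
  obtain f where "Q f > 0" "Q (x + f) > 0" by (rule ex_pos_translate)
  then show ?thesis
    using Re_B_Wext_pos[of f y] Re_B_Wext_pos[of "x + f" y]
    by (simp add: Wext.add B_add_left algebra_simps)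
qed

lemma B_Wext: "B (Wext x) (Wext y) = of_real theta * B x y"
proof (rule complex_eqI)
  show "Re (B (Wext x) (Wext y)) = Re (of_real theta * B x y)"
    by (simp add: Re_B_Wext)
  have Im_B: "Im (B u v) = Re (B u (sc (- \<i>) v))" for u v
    using B_scale_right[of u "- \<i>" v] by simp
  show "Im (B (Wext x) (Wext y)) = Im (of_real theta * B x y)"
    using Re_B_Wext[of x "sc (- \<i>) y"] by (simp add: Im_B Wext.scale Wext.neg)
qed

end

theorem theorem2p3:
  fixes sc :: "complex \<Rightarrow> 'a::ab_group_add \<Rightarrow> 'a"
    and B :: "'a \<Rightarrow> 'a \<Rightarrow> complex"
    and W :: "'a \<Rightarrow> 'a"
  assumes "vector_space sc"
    and "hermitian_sesq sc B"
    and "indefinite B"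
    and "nondegenerate B"
    and "linear_on sc (Fpp B) W"
    and "bij_betw W (Fpp B) (Fpp B)"
  shows "(\<exists>!V. Vector_Spaces.linear sc sc V \<and> (\<forall>f\<in>Fpp B. V f = W f))
    \<and> (let \<theta> = Inf ((\<lambda>f. Re (B (W f) (W f)) / Re (B f f)) ` Fpp B) in
         \<theta> > 0 \<and>
         (\<forall>V. Vector_Spaces.linear sc sc V \<and> (\<forall>f\<in>Fpp B. V f = W f) \<longrightarrow>
              bij V \<and> (\<forall>f g. B (V f) (V g) = complex_of_real \<theta> * B f g)))"
proof -
  interpret cone_bijection sc B W
    using assms by (intro cone_bijection.intro indefinite_form.intro hermitian_form.intro
        cone_bijection_axioms.intro indefinite_form_axioms.intro hermitian_form_axioms.intro)
  have "\<forall>f\<in>Fpp B. Wext f = W f" by (simp add: mem_Fpp_iff Wext_eq_W)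
  then have "\<exists>!V. Vector_Spaces.linear sc sc V \<and> (\<forall>f\<in>Fpp B. V f = W f)"
    using linear_Wext linear_extension_unique by blast
  then show ?thesis
    using theta_pos bij_Wext B_Wext linear_extension_unique
    unfolding Let_def theta_def[symmetric] by blast
qed

end
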